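(* Let $\mathcal{D}^*=(D,B,\mu)$ be the explicit blueprint described in the context. There exist $\delta_0>0$ and $C>0$ such that for every $\delta\in(0,\delta_0)$ there is a positive blueprint $\mathcal{D}^*_\delta=(D',B,\mu')$ such that: $\mathsf{Completeness}(\mathcal{D}^*_\delta)\ge\mathsf{Completeness}(\mathcal{D}^* )-C\delta$; $\mathsf{Soundness}(\mathcal{D}^*_\delta)\le\mathsf{Soundness}(\mathcal{D}^* )+C\delta$; every configuration $(b_i,b_j,b_{ij})$ in the support of $D'$ satisfies $-1+|b_i+b_j|<b_{ij}<1-|b_i-b_j|$; and $\mu'(b)\ge\delta$ for every $b\in B$.
   Context: $b_{GW}\in[-1,1)$ is the point where $\min_{b\in[-1,1)}\frac{\arccos(b)}{\pi}\cdot\frac{2}{1-b}$ is attained ($b_{GW}\approx-0.6891577$). $\Phi$ is the standard normal CDF; for $\rho\in[-1,1]$, $\Gamma_\rho(q_1,q_2)=\Pr[x\le\Phi^{-1}(q_1),\,y\le\Phi^{-1}(q_2)]$ for jointly Gaussian standard normals $x,y$ with correlation $\rho$. A configuration is $\theta=(b_i,b_j,b_{ij})\in[-1,1]^3$ with $-1+|b_i+b_j|\le b_{ij}\le1-|b_i-b_j|$; $\rho(\theta)=\frac{b_{ij}-b_ib_j}{\sqrt{(1-b_i^2)(1-b_j^2)}}$ (or $0$ if the denominator is $0$); $\theta$ is positive if $\rho(\theta)\le0$. A blueprint $\mathcal{D}=(D,B,\mu)$: $D$ a finitely supported distribution on configurations, $B$ the set of biases appearing in its support, $\mu$ a probability measure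 on $B$ with $\sum_b\mu(b)b=0$; positive if all configurations in the support are positive. $\mathsf{Completeness}(\mathcal{D})=\mathbb{E}_D\frac{1-b_{ij}}{2}$; for $t:B\to[-1,1]$, $\mathsf{Soundness}(\mathcal{D},t)=\mathbb{E}_{\theta\sim D}[\frac{1-t(b_i)}{2}+\frac{1-t(b_j)}{2}-2\Gamma_{\rho(\theta)}(\frac{1-t(b_i)}{2},\frac{1-t(b_j)}{2})]$, and $\mathsf{Soundness}(\mathcal{D})$ is its maximum over $t$ with $\sum_b\mu(b)t(b)=0$. The blueprint $\mathcal{D}^*$: let $b=1+b_{GW}$, $\nu_1=0.004$, $\nu_2=0.013$, and $b_1=-2b-\nu_2$, $b_2=-b-\nu_1$, $b_3=\nu_1$, $b_4=b-\nu_1$, $b_5=2b+\nu_1$; $B=\{b_1,\ldots,b_5\}$. $\mu(b_1)\approx0.325898600625$ and $\mu(b_4)\approx0.674101399375$ (exactly $\mu(b_1)=\frac{b_4}{b_4-b_1}$, $\mu(b_4)=\frac{-b_1}{b_4-b_1}$), $\mu(b_2)=\mu(b_3)=\mu(b_5)=0$. $D$ puts probability $0.351359472465$ on $(b_2,b_4,b_{GW})$, $0.273707303709$ on $(b_3,b_4,b_{GW})$, $0.271584315668$ on $(b_2,b_3,b_{GW})$, $0.064406822738$ on $(b_2,b_5,b_{GW})$, and $0.038942085420$ on $(b_1,b_5,b_{GW})$. *)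

theory Defs
  imports "HOL-Probability.Probability"
begin

definition gw_ratio :: "real \<Rightarrow> real" where
  "gw_ratio b = (arccos b / pi) * (2 / (1 - b))"

definition b_GW :: real where
  "b_GW = (SOME b. b \<in> {-1..<1} \<and> (\<forall>c\<in>{-1..<1}. gw_ratio b \<le> gw_ratio c))"

definition std_normal :: "real measure" where
  "std_normal = density lborel std_normal_density"

definition Phi :: "real \<Rightarrow> real" where
  "Phi x = measure std_normal {..x}"

(* Gamma_rho(q1,q2) = Pr[x <= Phi^-1(q1), y <= Phi^-1(q2)], x,y standard normals with
   correlation rho, realised as x = u, y = rho*u + sqrt(1-rho^2)*v with u,v iid N(0,1).
   The event x <= Phi^-1(q) is written Phi x <= q (equivalent for q in [0,1],
   with Phi^-1(0) = -infinity, Phi^-1(1) = +infinity). *)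
definition Gamma :: "real \<Rightarrow> real \<Rightarrow> real \<Rightarrow> real" where
  "Gamma \<rho> q1 q2 = measure (std_normal \<Otimes>\<^sub>M std_normal)
     {(u, v). Phi u \<le> q1 \<and> Phi (\<rho> * u + sqrt (1 - \<rho>\<^sup>2) * v) \<le> q2}"

type_synonym config = "real \<times> real \<times> real"

definition is_config :: "config \<Rightarrow> bool" where
  "is_config \<theta> = (case \<theta> of (ci, cj, cij) \<Rightarrow>
     ci \<in> {-1..1} \<and> cj \<in> {-1..1} \<and> cij \<in> {-1..1} \<and>
     -1 + \<bar>ci + cj\<bar> \<le> cij \<and> cij \<le> 1 - \<bar>ci - cj\<bar>)"

definition rho :: "config \<Rightarrow> real" where
  "rho \<theta> = (case \<theta> of (ci, cj, cij) \<Rightarrow>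
     (if sqrt ((1 - ci\<^sup>2) * (1 - cj\<^sup>2)) = 0 then 0
      else (cij - ci * cj) / sqrt ((1 - ci\<^sup>2) * (1 - cj\<^sup>2))))"

definition positive_config :: "config \<Rightarrow> bool" where
  "positive_config \<theta> = (rho \<theta> \<le> 0)"

definition biases :: "config pmf \<Rightarrow> real set" where
  "biases D = (\<Union>(ci, cj, cij)\<in>set_pmf D. {ci, cj})"

definition is_blueprint :: "config pmf \<Rightarrow> real set \<Rightarrow> real pmf \<Rightarrow> bool" where
  "is_blueprint D B \<mu> \<longleftrightarrow> finite (set_pmf D) \<and> (\<forall>\<theta>\<in>set_pmf D. is_config \<theta>) \<and>
     B = biases D \<and> set_pmf \<mu> \<subseteq> B \<and> (\<Sum>b\<in>B. pmf \<mu> b * b) = 0"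

definition positive_blueprint :: "config pmf \<Rightarrow> real set \<Rightarrow> real pmf \<Rightarrow> bool" where
  "positive_blueprint D B \<mu> \<longleftrightarrow> is_blueprint D B \<mu> \<and> (\<forall>\<theta>\<in>set_pmf D. positive_config \<theta>)"

definition completeness :: "config pmf \<Rightarrow> real" where
  "completeness D = measure_pmf.expectation D (\<lambda>(ci, cj, cij). (1 - cij) / 2)"

definition soundness_t :: "config pmf \<Rightarrow> (real \<Rightarrow> real) \<Rightarrow> real" where
  "soundness_t D t = measure_pmf.expectation D (\<lambda>\<theta>. case \<theta> of (ci, cj, cij) \<Rightarrow>
      (1 - t ci) / 2 + (1 - t cj) / 2 - 2 * Gamma (rho \<theta>) ((1 - t ci) / 2) ((1 - t cj) / 2))"

(* maximum over t : B -> [-1,1] with sum_b mu(b) t(b) = 0 (attained; written as Sup) *)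
definition soundness :: "config pmf \<Rightarrow> real set \<Rightarrow> real pmf \<Rightarrow> real" where
  "soundness D B \<mu> = Sup {soundness_t D t | t. (\<forall>b\<in>B. t b \<in> {-1..1}) \<and> (\<Sum>b\<in>B. pmf \<mu> b * t b) = 0}"

definition bb :: real where "bb = 1 + b_GW"
definition nu1 :: real where "nu1 = 0.004"
definition nu2 :: real where "nu2 = 0.013"
definition b1 :: real where "b1 = -2 * bb - nu2"
definition b2 :: real where "b2 = - bb - nu1"
definition b3 :: real where "b3 = nu1"
definition b4 :: real where "b4 = bb - nu1"
definition b5 :: real where "b5 = 2 * bb + nu1"

definition B_star :: "real set" where "B_star = {b1, b2, b3, b4, b5}"

definition mu_star :: "real pmf" where
  "mu_star = pmf_of_list [(b1, b4 / (b4 - b1)), (b4, - b1 / (b4 - b1))]"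

definition D_star :: "config pmf" where
  "D_star = pmf_of_list
     [((b2, b4, b_GW), 0.351359472465),
      ((b3, b4, b_GW), 0.273707303709),
      ((b2, b3, b_GW), 0.271584315668),
      ((b2, b5, b_GW), 0.064406822738),
      ((b1, b5, b_GW), 0.038942085420)]"

end

theory Submission
  imports Defs
begin

(* Raising the correlation entry b_ij of every configuration of D* by a small epsilon > 0 moves
   the configurations lying on the face b_ij = -1 + |b_i + b_j| into the interior of the
   configuration polytope while keeping rho < 0. This lowers the completeness by epsilon/2 and,
   since Gamma_rho(q1, q2) is continuous in rho uniformly in the quantiles, changes every soundness
   term by as little as we like. The new bias distribution mu_delta mixes mu* with a signed measure
   giving mass delta to each of b2, b3, b5. A threshold function t balanced for mu_delta has
   mu*-mean O(delta), so recentring it moves t by O(delta), and the soundness objective moves by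
   O(delta) because Gamma_rho is 1-Lipschitz in each quantile. All that is needed about b_GW is
   -0.99 < b_GW < -0.62, obtained by comparing gw_ratio with 0.879. *)

section \<open>The Goemans--Williamson point\<close>

lemma cos_le_taylor6: "cos (x::real) \<le> 1 - x^2/2 + x^4/24 + x^6/720"
proof -
  obtain t where t: "cos x = (\<Sum>m<6. cos_coeff m * x ^ m) + cos (t + 1/2 * real 6 * pi) / fact 6 * x ^ 6"
    using Maclaurin_cos_expansion[of x 6] by blast
  have "cos_coeff 0 = 1" "cos_coeff 1 = 0" "cos_coeff 2 = -1/2" "cos_coeff 3 = 0"
    "cos_coeff 4 = 1/24" "cos_coeff 5 = 0"
    by (simp_all add: cos_coeff_def fact_numeral)
  then have "(\<Sum>m<6. cos_coeff m * x ^ m) = 1 - x^2/2 + x^4/24"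
    by (simp add: eval_nat_numeral)
  moreover have "cos (t + 1/2 * real 6 * pi) / fact 6 * x ^ 6 \<le> 1 / fact 6 * x^6"
    by (intro mult_right_mono divide_right_mono) (auto intro: zero_le_even_power)
  ultimately show ?thesis using t by (simp add: fact_numeral)
qed

lemma cos_ge_taylor2: "1 - (x::real)^2/2 \<le> cos x"
proof -
  have "cos x = 1 - 2 * sin (x/2) ^ 2"
    using cos_double_sin[of "x/2"] by simp
  moreover have "sin (x/2) ^ 2 \<le> (x/2)^2"
    by (metis abs_le_square_iff abs_sin_x_le_abs_x)
  ultimately show ?thesis by (simp add: power_divide)
qed

lemma gw_ratio_gt_if_arccos_gt:
  assumes "b < 1" and "k * pi * (1 - b) / 2 < arccos b"
  shows "k < gw_ratio b"
proof -
  have "k * (pi * (1 - b)) < 2 * arccos b" using assms(2) by (simp add: mult.assoc)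
  then show ?thesis using assms(1) by (simp add: gw_ratio_def pos_less_divide_eq)
qed

lemma gw_ratio_gt_near_minus_one:
  assumes "-1 \<le> b" "b \<le> -0.99"
  shows "0.879 < gw_ratio b"
proof (rule gw_ratio_gt_if_arccos_gt)
  have "cos 0.15 \<le> (0.99::real)" using cos_le_taylor6[of "0.15"] by (simp add: power_divide)
  then have "arccos 0.99 \<le> arccos (cos 0.15)" by (intro arccos_le_arccos) auto
  also have "\<dots> = 0.15" using pi_gt3 by (intro arccos_cos) auto
  finally have "arccos 0.99 \<le> 0.15" .
  moreover have "arccos (-0.99) \<le> arccos b" using assms by (intro arccos_le_arccos) auto
  moreover have "arccos (-0.99) = pi - arccos 0.99" using arccos_minus[of "0.99"] by simp
  moreover have "0.879 * pi * (1 - b) / 2 \<le> 0.879 * pi"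
    using assms mult_left_mono[of "1 - b" 2 pi] by simp
  moreover have "0.879 * pi < pi - 0.15" using pi_gt3 by simp
  ultimately show "0.879 * pi * (1 - b) / 2 < arccos b" by linarith
qed (use assms in simp)

lemma gw_ratio_gt_middle:
  assumes "-0.62 \<le> b" "b \<le> 0"
  shows "0.879 < gw_ratio b"
proof (rule gw_ratio_gt_if_arccos_gt)
  have pi: "3.141592653588 \<le> pi" "pi \<le> 3.1415926535899" by (rule pi_approx)+
  define g where "g x = arccos x - 0.879 * pi * (1 - x) / 2" for x
  \<comment> \<open>\<open>x0\<close> lies just above \<open>arccos 0.62\<close>.\<close>
  define x0 where "x0 = 0.28801 * pi"
  have x0: "0.9048 \<le> x0" "x0 \<le> 0.9049" using pi by (simp_all add: x0_def)
  have "cos x0 \<le> 1 - x0^2/2 + x0^4/24 + x0^6/720" by (rule cos_le_taylor6)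
  also have "\<dots> \<le> 1 - 0.9048^2/2 + 0.9049^4/24 + 0.9049^6/720"
    using x0 power_mono[of "0.9048" x0 2] power_mono[of x0 "0.9049" 4] power_mono[of x0 "0.9049" 6]
    by linarith
  finally have "cos x0 < 0.62" by (simp add: power_divide)
  then have "arccos 0.62 < arccos (cos x0)" by (intro arccos_less_arccos) auto
  also have "\<dots> = x0" using x0 pi by (intro arccos_cos) (auto simp: x0_def)
  finally have "0 < g (-0.62)"
    using arccos_minus[of "0.62"] by (simp add: g_def x0_def algebra_simps)
  moreover have "g (-0.62) \<le> g b"
  proof (rule DERIV_nonneg_imp_nondecreasing[OF assms(1)])
    fix x :: real assume x: "-0.62 \<le> x" "x \<le> b"
    have deriv: "DERIV g x :> inverse (- sqrt (1 - x\<^sup>2)) + 0.879 * pi / 2"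
      unfolding g_def using x assms
      by (auto intro!: derivative_eq_intros DERIV_arccos)
    have x2: "x\<^sup>2 \<le> 0.62\<^sup>2"
      using x assms by (subst abs_le_square_iff[symmetric]) auto
    then have "0.78 \<le> sqrt (1 - x\<^sup>2)"
      by (intro real_le_rsqrt) (simp add: power2_eq_square)
    then have "1 / sqrt (1 - x\<^sup>2) \<le> 1 / 0.78" by (intro divide_left_mono) (use x2 in \<open>auto simp: power_divide\<close>)
    also have "\<dots> \<le> 0.879 * pi / 2" using pi by simp
    finally have "0 \<le> inverse (- sqrt (1 - x\<^sup>2)) + 0.879 * pi / 2"
      by (simp add: inverse_eq_divide)
    with deriv show "\<exists>y. DERIV g x :> y \<and> 0 \<le> y" by blast
  qed
  ultimately show "0.879 * pi * (1 - b) / 2 < arccos b" by (simp add: g_def)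
qed (use assms in simp)

lemma gw_ratio_gt_nonneg:
  assumes "0 \<le> b" "b < 1"
  shows "0.879 < gw_ratio b"
proof (rule gw_ratio_gt_if_arccos_gt)
  define x where "x = arccos b"
  have "0 \<le> x" "cos x = b" using assms by (simp_all add: x_def arccos_lbound cos_arccos)
  then have "2 * (1 - b) \<le> x\<^sup>2" using cos_ge_taylor2[of x] by simp
  moreover have "(1 - b)\<^sup>2 \<le> 1 - b" using assms by (simp add: power2_eq_square mult_le_cancel_left1)
  ultimately have "8 * (1 - b)\<^sup>2 \<le> (2 * x)\<^sup>2" by (simp add: power_mult_distrib)
  moreover have "(0.879 * pi)\<^sup>2 < 8"
    using pi_approx power_mono[of "0.879 * pi" "0.879 * 3.1415926535899" 2]
    by (simp add: power_divide)
  then have "(0.879 * pi * (1 - b))\<^sup>2 < 8 * (1 - b)\<^sup>2"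
    using assms unfolding power_mult_distrib by (intro mult_strict_right_mono) auto
  ultimately have "(0.879 * pi * (1 - b))\<^sup>2 < (2 * x)\<^sup>2" by linarith
  then have "0.879 * pi * (1 - b) < 2 * x"
    by (rule power2_less_imp_less) (use \<open>0 \<le> x\<close> in simp)
  then show "0.879 * pi * (1 - b) / 2 < arccos b" by (simp add: x_def)
qed (use assms in simp)

lemma sqrt2_half_bounds: "0 \<le> sqrt 2 / 2" "sqrt 2 / 2 \<le> (1::real)"
  using sqrt2_less_2 by simp_all

lemma gw_ratio_minus_sqrt2_half: "gw_ratio (- (sqrt 2 / 2)) < 0.879"
proof -
  have "arccos (sqrt 2 / 2) = pi / 4"
    using arccos_cos[of "pi/4"] by (simp add: cos_45)
  moreover have "arccos (- (sqrt 2 / 2)) = pi - arccos (sqrt 2 / 2)"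
    using sqrt2_half_bounds by (intro arccos_minus) linarith+
  ultimately have arccos_eq: "arccos (- (sqrt 2 / 2)) = 3 / 4 * pi" by simp
  have "gw_ratio (- (sqrt 2 / 2)) = 3 / 2 / (1 + sqrt 2 / 2)"
    unfolding gw_ratio_def arccos_eq by simp
  moreover have "1.414 \<le> sqrt 2" by (rule real_le_rsqrt) (simp add: power_divide)
  then have "3 / 2 < 0.879 * (1 + sqrt 2 / 2)" by simp
  ultimately show ?thesis by (simp add: pos_divide_less_eq)
qed

lemma b_GW_minimises: "b_GW \<in> {-1..<1} \<and> (\<forall>c\<in>{-1..<1}. gw_ratio b_GW \<le> gw_ratio c)"
  unfolding b_GW_def
proof (rule someI_ex)
  have "continuous_on {-1..0} arccos"
    by (rule continuous_on_subset[OF continuous_on_arccos']) auto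
  moreover have "continuous_on {-1..0} (\<lambda>b::real. 2 / (1 - b))"
    by (intro continuous_intros) auto
  ultimately have "continuous_on {-1..0} gw_ratio"
    unfolding gw_ratio_def by (intro continuous_intros) auto
  then obtain m where m: "m \<in> {-1..0}" "\<And>c. c \<in> {-1..0} \<Longrightarrow> gw_ratio m \<le> gw_ratio c"
    using continuous_attains_inf[OF compact_Icc, of "-1" 0 gw_ratio] by auto
  have "gw_ratio m < 0.879"
    using m(2)[of "- (sqrt 2 / 2)"] gw_ratio_minus_sqrt2_half sqrt2_half_bounds by simp
  then have "gw_ratio m \<le> gw_ratio c" if "c \<in> {-1..<1}" for c
    using m(2)[of c] gw_ratio_gt_nonneg[of c] that by (cases "c \<le> 0") auto
  with m(1) show "\<exists>b. b \<in> {-1..<1} \<and> (\<forall>c\<in>{-1..<1}. gw_ratio b \<le> gw_ratio c)" by auto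
qed

lemma b_GW_bounds: "-0.99 < b_GW" "b_GW < -0.62"
proof -
  have "- (sqrt 2 / 2) \<in> {-1..<1}"
    using sqrt2_half_bounds unfolding atLeastLessThan_iff by linarith
  then have "gw_ratio b_GW \<le> gw_ratio (- (sqrt 2 / 2))"
    using b_GW_minimises by blast
  then have not_gt: "\<not> 0.879 < gw_ratio b_GW" using gw_ratio_minus_sqrt2_half by simp
  have range: "-1 \<le> b_GW" "b_GW < 1" using b_GW_minimises by auto
  show "-0.99 < b_GW"
    using not_gt gw_ratio_gt_near_minus_one[of b_GW] range by (cases "b_GW \<le> -0.99") auto
  show "b_GW < -0.62"
    using not_gt gw_ratio_gt_middle[of b_GW] gw_ratio_gt_nonneg[of b_GW] range
    by (cases "b_GW \<le> 0"; cases "b_GW < -0.62") auto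
qed

section \<open>The standard normal distribution\<close>

lemma real_distribution_std_normal: "real_distribution std_normal"
  unfolding std_normal_def by (rule real_dist_normal_dist)

interpretation std_normal: real_distribution std_normal
  by (rule real_distribution_std_normal)

lemma space_std_normal [simp]: "space std_normal = UNIV"
  by (simp add: std_normal_def)

lemma sets_std_normal [simp, measurable_cong]: "sets std_normal = sets borel"
  by (simp add: std_normal_def)

lemma Phi_eq_cdf: "Phi = cdf std_normal"
  by (simp add: fun_eq_iff Phi_def cdf_def)

lemma std_normal_singleton: "measure std_normal {x} = 0"
proof -
  have "{x} \<in> null_sets lborel" by (rule countable_imp_null_set_lborel) simp
  then have "AE y in lborel. y \<in> {x} \<longrightarrow> std_normal_density y = 0"
    by (rule AE_mp[OF AE_not_in]) simp
  then have "{x} \<in> null_sets std_normal"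
    unfolding std_normal_def by (subst null_sets_density_iff) auto
  then show ?thesis by (rule measure_eq_0_null_sets)
qed

lemma isCont_Phi: "isCont Phi x"
  unfolding Phi_eq_cdf using std_normal.isCont_cdf std_normal_singleton by simp

lemma mono_Phi: "mono Phi"
  unfolding Phi_eq_cdf by (rule monoI) (rule std_normal.cdf_nondecreasing)

lemma Phi_le_1: "Phi x \<le> 1"
  unfolding Phi_eq_cdf by (rule std_normal.cdf_bounded_prob)

lemma Phi_at_bot: "(Phi \<longlongrightarrow> 0) at_bot"
  unfolding Phi_eq_cdf by (rule std_normal.cdf_lim_at_bot)

lemma Phi_at_top: "(Phi \<longlongrightarrow> 1) at_top"
  unfolding Phi_eq_cdf by (rule std_normal.cdf_lim_at_top_prob)

lemma borel_measurable_Phi [measurable]: "Phi \<in> borel_measurable borel"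
  using mono_Phi by (rule borel_measurable_mono)

lemma closed_downset_real_cases:
  fixes S :: "real set"
  assumes "closed S" and down: "\<And>x y. x \<in> S \<Longrightarrow> y \<le> x \<Longrightarrow> y \<in> S"
  shows "S = {} \<or> S = UNIV \<or> (\<exists>m. S = {..m})"
proof (cases "S = {} \<or> S = UNIV")
  case False
  then obtain z where "z \<notin> S" by blast
  then have "bdd_above S" using down by (meson bdd_aboveI linorder_le_cases)
  then have "Sup S \<in> S" using False \<open>closed S\<close> by (intro closed_contains_Sup) auto
  then have "S = {..Sup S}" using down cSup_upper[OF _ \<open>bdd_above S\<close>] by auto
  then show ?thesis by blast
qed auto

lemma measure_Phi_le:
  assumes "0 \<le> q" "q \<le> 1"
  shows "measure std_normal {z. Phi z \<le> q} = q"
proof -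
  have "closed {z. Phi z \<le> q}"
    using isCont_Phi by (intro closed_Collect_le continuous_intros) (auto intro: continuous_at_imp_continuous_on)
  moreover have "\<And>x y. Phi x \<le> q \<Longrightarrow> y \<le> x \<Longrightarrow> Phi y \<le> q"
    using mono_Phi by (meson monoD order_trans)
  ultimately consider "{z. Phi z \<le> q} = {}" | "{z. Phi z \<le> q} = UNIV" | m where "{z. Phi z \<le> q} = {..m}"
    using closed_downset_real_cases[of "{z. Phi z \<le> q}"] by auto
  then show ?thesis
  proof cases
    case 1
    then have "q \<le> 0"
      by (intro tendsto_lowerbound[OF Phi_at_bot]) (auto intro: always_eventually less_imp_le simp: not_le)
    with 1 assms show ?thesis by simp
  next
    case 2
    then have "1 \<le> q" by (intro tendsto_upperbound[OF Phi_at_top]) (auto intro: always_eventually)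
    with 2 assms show ?thesis using std_normal.prob_space by simp
  next
    case 3
    then have "Phi m \<le> q" by auto
    moreover have "q \<le> Phi m"
    proof (rule tendsto_lowerbound)
      show "(Phi \<longlongrightarrow> Phi m) (at_right m)"
        using isCont_Phi[of m] by (simp add: isCont_def filterlim_at_split)
      have "q \<le> Phi z" if "m < z" for z
        using 3 that by (metis atMost_iff linorder_not_le mem_Collect_eq order_less_imp_le)
      then show "\<forall>\<^sub>F z in at_right m. q \<le> Phi z"
        by (intro eventually_at_rightI[of m "m + 1"]) auto
    qed simp
    ultimately show ?thesis using 3 by (simp add: Phi_def)
  qed
qed

lemma std_normal_density_le: "std_normal_density x \<le> 1 / 2"
proof -
  have "2 \<le> sqrt (2 * pi)" using pi_ge_two by (intro real_le_rsqrt) simp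
  then have "1 / sqrt (2 * pi) \<le> 1 / 2" by (intro divide_left_mono) auto
  moreover have "exp (- x\<^sup>2 / 2) \<le> 1" by simp
  ultimately have "1 / sqrt (2 * pi) * exp (- x\<^sup>2 / 2) \<le> 1 / 2 * 1"
    by (intro mult_mono) auto
  then show ?thesis by (simp add: std_normal_density_def)
qed

lemma Phi_diff_le:
  assumes "x \<le> y"
  shows "Phi y - Phi x \<le> (y - x) / 2"
proof -
  have "emeasure std_normal {x<..y} = (\<integral>\<^sup>+z. ennreal (std_normal_density z) * indicator {x<..y} z \<partial>lborel)"
    unfolding std_normal_def by (rule emeasure_density) auto
  also have "\<dots> \<le> (\<integral>\<^sup>+z. ennreal (1 / 2) * indicator {x<..y} z \<partial>lborel)"
    by (intro nn_integral_mono mult_right_mono ennreal_leI std_normal_density_le) simp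
  also have "\<dots> = ennreal (1 / 2) * ennreal (y - x)"
    using assms by (simp only: nn_integral_cmult_indicator emeasure_lborel_Ioc sets_lborel atLeastAtMost_borel greaterThanAtMost_borel)
  also have "\<dots> = ennreal (1 / 2 * (y - x))"
    by (rule ennreal_mult''[symmetric]) (use assms in simp)
  finally have "measure std_normal {x<..y} \<le> (y - x) / 2"
    using assms by (simp add: std_normal.emeasure_eq_measure)
  moreover have "Phi y - Phi x = measure std_normal {x<..y}"
    using assms std_normal.cdf_diff_eq[of x y]
    by (cases "x = y") (simp_all add: Phi_eq_cdf)
  ultimately show ?thesis by simp
qed

lemma std_normal_tail:
  assumes "e > 0"
  shows "\<exists>K>0. measure std_normal {z. K < \<bar>z\<bar>} \<le> e"
proof -
  have "((\<lambda>K. Phi (- K)) \<longlongrightarrow> 0) at_top"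
    by (rule filterlim_compose[OF Phi_at_bot filterlim_uminus_at_bot_at_top])
  then have "\<forall>\<^sub>F K in at_top. Phi (- K) < e / 2"
    by (rule order_tendstoD(2)) (use assms in simp)
  moreover have "\<forall>\<^sub>F K in at_top. 1 - e / 2 < Phi K"
    using assms by (intro order_tendstoD(1)[OF Phi_at_top]) simp
  ultimately have "\<forall>\<^sub>F K in at_top. 0 < K \<and> Phi (- K) < e / 2 \<and> 1 - e / 2 < Phi K"
    using eventually_gt_at_top[of 0] by eventually_elim auto
  then obtain K where K: "0 < K" "Phi (- K) < e / 2" "1 - e / 2 < Phi K"
    by (auto simp: eventually_at_top_linorder)
  have "measure std_normal {z. K < \<bar>z\<bar>} \<le> measure std_normal ({..- K} \<union> (UNIV - {..K}))"
    by (intro std_normal.finite_measure_mono) auto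
  also have "\<dots> \<le> measure std_normal {..- K} + measure std_normal (UNIV - {..K})"
    by (rule measure_Un_le) simp_all
  also have "\<dots> = Phi (- K) + (1 - Phi K)"
    using std_normal.prob_compl[of "{..K}"] by (simp add: Phi_def)
  finally show ?thesis using K by (intro exI[of _ K]) auto
qed

context prob_space
begin

lemma prob_Phi_le:
  assumes "X \<in> borel_measurable M" "distr M borel X = std_normal" "0 \<le> q" "q \<le> 1"
  shows "prob {x\<in>space M. Phi (X x) \<le> q} = q"
proof -
  have "prob {x\<in>space M. Phi (X x) \<le> q} = measure (distr M borel X) {z. Phi z \<le> q}"
    using assms(1) by (subst measure_distr) (auto intro!: arg_cong[where f = prob])
  then show ?thesis using assms(2-) by (simp add: measure_Phi_le)
qed

lemma prob_Phi_between:
  assumes "X \<in> borel_measurable M" "distr M borel X = std_normal" "0 \<le> q" "q \<le> q'" "q' \<le> 1"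
  shows "prob {x\<in>space M. q < Phi (X x) \<and> Phi (X x) \<le> q'} = q' - q"
proof -
  have "{x\<in>space M. q < Phi (X x) \<and> Phi (X x) \<le> q'}
      = {x\<in>space M. Phi (X x) \<le> q'} - {x\<in>space M. Phi (X x) \<le> q}" by auto
  moreover have "{x\<in>space M. Phi (X x) \<le> q} \<subseteq> {x\<in>space M. Phi (X x) \<le> q'}"
    using assms(4) by auto
  ultimately show ?thesis
    using assms by (simp add: finite_measure_Diff prob_Phi_le)
qed

lemma prob_conj_Phi_le_lipschitz:
  assumes "X \<in> borel_measurable M" "distr M borel X = std_normal" "{x\<in>space M. Q x} \<in> events"
    and "0 \<le> q" "q \<le> 1" "0 \<le> q'" "q' \<le> 1"
  shows "\<bar>prob {x\<in>space M. Q x \<and> Phi (X x) \<le> q} - prob {x\<in>space M. Q x \<and> Phi (X x) \<le> q'}\<bar>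
    \<le> \<bar>q - q'\<bar>"
proof -
  let ?S = "\<lambda>a. {x\<in>space M. Q x \<and> Phi (X x) \<le> a}"
  have step: "0 \<le> prob (?S b) - prob (?S a) \<and> prob (?S b) - prob (?S a) \<le> b - a"
    if "0 \<le> a" "a \<le> b" "b \<le> 1" for a b
  proof -
    have sub: "?S a \<subseteq> ?S b" using that by auto
    have "prob (?S b) - prob (?S a) = prob (?S b - ?S a)"
      using assms(1,3) sub by (simp add: finite_measure_Diff)
    also have "\<dots> \<le> prob {x\<in>space M. a < Phi (X x) \<and> Phi (X x) \<le> b}"
      using assms(1) by (intro finite_measure_mono) auto
    also have "\<dots> = b - a" using assms(1,2) that by (rule prob_Phi_between)
    finally show ?thesis using assms(1,3) sub by (auto intro: finite_measure_mono)
  qed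
  show ?thesis
  proof (cases "q \<le> q'")
    case True
    then show ?thesis using step[of q q'] assms(4-) by (simp add: abs_if)
  next
    case False
    then show ?thesis using step[of q' q] assms(4-) by (simp add: abs_if)
  qed
qed

lemma prob_conj_Phi_le_perturb:
  assumes "X \<in> borel_measurable M" "Y \<in> borel_measurable M" "distr M borel Y = std_normal"
    and "{x\<in>space M. Q x} \<in> events" "E \<in> events"
    and close: "\<And>x. x \<in> space M - E \<Longrightarrow> Y x \<le> X x + \<eta>"
    and "0 \<le> \<eta>" "0 \<le> q" "q \<le> 1"
  shows "prob {x\<in>space M. Q x \<and> Phi (X x) \<le> q}
    \<le> prob {x\<in>space M. Q x \<and> Phi (Y x) \<le> q} + prob E + \<eta> / 2"
proof -
  define q' where "q' = min 1 (q + \<eta> / 2)"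
  define band where "band = {x\<in>space M. q < Phi (Y x) \<and> Phi (Y x) \<le> q'}"
  have "Phi (Y x) \<le> q'" if "x \<in> space M - E" "Phi (X x) \<le> q" for x
  proof -
    have "Phi (Y x) \<le> Phi (X x + \<eta>)" using close[OF that(1)] mono_Phi by (auto dest: monoD)
    also have "\<dots> \<le> Phi (X x) + \<eta> / 2" using Phi_diff_le[of "X x" "X x + \<eta>"] assms(7) by simp
    finally show ?thesis using that(2) Phi_le_1 by (simp add: q'_def)
  qed
  then have "{x\<in>space M. Q x \<and> Phi (X x) \<le> q} \<subseteq> {x\<in>space M. Q x \<and> Phi (Y x) \<le> q} \<union> E \<union> band"
    by (auto simp: band_def not_le)
  moreover have "band \<in> events" unfolding band_def using assms(2) by measurable
  ultimately have "prob {x\<in>space M. Q x \<and> Phi (X x) \<le> q}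
      \<le> prob ({x\<in>space M. Q x \<and> Phi (Y x) \<le> q} \<union> E \<union> band)"
    using assms(2,4,5) by (intro finite_measure_mono) auto
  also have "\<dots> \<le> prob {x\<in>space M. Q x \<and> Phi (Y x) \<le> q} + prob E + prob band"
    using assms(2,4,5) \<open>band \<in> events\<close>
    by (intro order_trans[OF measure_Un_le] add_right_mono measure_Un_le) auto
  also have "prob band = q' - q"
    unfolding band_def using assms(2,3,7-) by (intro prob_Phi_between) (auto simp: q'_def)
  finally show ?thesis by (simp add: q'_def)
qed

end

section \<open>Correlated Gaussian pairs\<close>

abbreviation gauss2 :: "(real \<times> real) measure" where
  "gauss2 \<equiv> std_normal \<Otimes>\<^sub>M std_normal"

interpretation gauss2: prob_space gauss2
  by (intro prob_space_pair std_normal.prob_space_axioms)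

lemma space_gauss2 [simp]: "space gauss2 = UNIV"
  by (simp add: space_pair_measure)

lemma sets_gauss2 [measurable_cong]: "sets gauss2 = sets (borel \<Otimes>\<^sub>M borel)"
  by (rule sets_pair_measure_cong) simp_all

lemma distr_gauss2_fst: "distr gauss2 borel fst = std_normal"
proof -
  have "distr gauss2 borel fst = distr gauss2 std_normal fst" by (rule distr_cong) simp_all
  then show ?thesis by (simp add: std_normal.distr_pair_fst)
qed

lemma distr_gauss2_snd: "distr gauss2 borel snd = std_normal"
proof -
  have "distr gauss2 std_normal snd = std_normal"
  proof (rule measure_eqI)
    fix A assume A: "A \<in> sets (distr gauss2 std_normal snd)"
    then have "emeasure (distr gauss2 std_normal snd) A = emeasure gauss2 (UNIV \<times> A)"
      by (auto simp: emeasure_distr intro!: arg_cong2[where f = emeasure])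
    also have "\<dots> = emeasure std_normal UNIV * emeasure std_normal A"
      using A by (intro std_normal.emeasure_pair_measure_Times) auto
    finally show "emeasure (distr gauss2 std_normal snd) A = emeasure std_normal A"
      using std_normal.emeasure_space_1 by simp
  qed simp
  moreover have "distr gauss2 borel snd = distr gauss2 std_normal snd" by (rule distr_cong) simp_all
  ultimately show ?thesis by simp
qed

lemma indep_var_gauss2_fst_snd: "gauss2.indep_var borel fst borel snd"
proof -
  have "distr gauss2 (borel \<Otimes>\<^sub>M borel) (\<lambda>x. (fst x, snd x)) = distr gauss2 gauss2 (\<lambda>x. x)"
    by (rule distr_cong) (simp_all add: sets_gauss2)
  then show ?thesis
    by (simp add: gauss2.indep_var_distribution_eq distr_gauss2_fst distr_gauss2_snd)
qed

lemma distributed_std_normal_iff: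
  assumes "X \<in> borel_measurable gauss2"
  shows "distributed gauss2 lborel X std_normal_density \<longleftrightarrow> distr gauss2 borel X = std_normal"
proof -
  have "distr gauss2 lborel X = distr gauss2 borel X" by (rule distr_cong) simp_all
  then show ?thesis using assms unfolding distributed_def std_normal_def by simp
qed

definition corr_normal :: "real \<Rightarrow> real \<times> real \<Rightarrow> real" where
  "corr_normal \<rho> x = \<rho> * fst x + sqrt (1 - \<rho>\<^sup>2) * snd x"

lemma corr_normal_measurable [measurable]: "corr_normal \<rho> \<in> borel_measurable gauss2"
  unfolding corr_normal_def by measurable

lemma distr_corr_normal:
  assumes "\<bar>\<rho>\<bar> \<le> 1"
  shows "distr gauss2 borel (corr_normal \<rho>) = std_normal"
proof -
  have fst: "distributed gauss2 lborel fst std_normal_density"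
    by (simp add: distributed_std_normal_iff distr_gauss2_fst)
  have snd: "distributed gauss2 lborel snd std_normal_density"
    by (simp add: distributed_std_normal_iff distr_gauss2_snd)
  consider "\<rho> = 1" | "\<rho> = -1" | "\<bar>\<rho>\<bar> < 1" using assms by linarith
  then have "distributed gauss2 lborel (corr_normal \<rho>) std_normal_density"
  proof cases
    case 1
    then have "corr_normal \<rho> = fst" by (simp add: corr_normal_def fun_eq_iff)
    then show ?thesis using fst by simp
  next
    case 2
    then have "corr_normal \<rho> = (\<lambda>x. 0 + (-1) * fst x)" by (simp add: corr_normal_def fun_eq_iff)
    then show ?thesis using gauss2.normal_density_affine[OF fst, of "-1" 0] by simp
  next
    case 3
    define s where "s = sqrt (1 - \<rho>\<^sup>2)"
    have "\<rho>\<^sup>2 < 1" using 3 abs_square_less_1 by blast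
    then have s: "0 < s" "\<rho>\<^sup>2 + s\<^sup>2 = 1" by (simp_all add: s_def)
    show ?thesis
    proof (cases "\<rho> = 0")
      case True
      then have "corr_normal \<rho> = snd" by (simp add: corr_normal_def fun_eq_iff)
      then show ?thesis using snd by simp
    next
      case False
      have "gauss2.indep_var borel ((\<lambda>u. \<rho> * u) \<circ> fst) borel ((\<lambda>v. s * v) \<circ> snd)"
        by (rule gauss2.indep_var_compose[OF indep_var_gauss2_fst_snd]) simp_all
      then have "distributed gauss2 lborel (\<lambda>x. (0 + \<rho> * fst x) + (0 + s * snd x))
          (normal_density (0 + 0) (sqrt ((\<bar>\<rho>\<bar> * 1)\<^sup>2 + (\<bar>s\<bar> * 1)\<^sup>2)))"
        using False s gauss2.normal_density_affine[OF fst, of \<rho> 0]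
          gauss2.normal_density_affine[OF snd, of s 0]
        by (intro gauss2.add_indep_normal) (simp_all add: comp_def)
      then show ?thesis using s by (simp add: corr_normal_def[abs_def] s_def power_mult_distrib)
    qed
  qed
  then show ?thesis by (simp add: distributed_std_normal_iff)
qed

lemma Gamma_eq_prob:
  "Gamma \<rho> q1 q2 = gauss2.prob {x\<in>space gauss2. Phi (fst x) \<le> q1 \<and> Phi (corr_normal \<rho> x) \<le> q2}"
  unfolding Gamma_def corr_normal_def by (rule arg_cong[where f = "measure gauss2"]) auto

lemma Gamma_lipschitz:
  assumes "\<bar>\<rho>\<bar> \<le> 1" and "q1 \<in> {0..1}" "q1' \<in> {0..1}" "q2 \<in> {0..1}" "q2' \<in> {0..1}"
  shows "\<bar>Gamma \<rho> q1 q2 - Gamma \<rho> q1' q2'\<bar> \<le> \<bar>q1 - q1'\<bar> + \<bar>q2 - q2'\<bar>"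
proof -
  have "Gamma \<rho> a q2 = gauss2.prob {x\<in>space gauss2. Phi (corr_normal \<rho> x) \<le> q2 \<and> Phi (fst x) \<le> a}"
    for a by (simp add: Gamma_eq_prob conj_commute)
  moreover have "{x\<in>space gauss2. Phi (corr_normal \<rho> x) \<le> q2} \<in> gauss2.events" by measurable
  ultimately have "\<bar>Gamma \<rho> q1 q2 - Gamma \<rho> q1' q2\<bar> \<le> \<bar>q1 - q1'\<bar>"
    using assms(2,3) distr_gauss2_fst
    by (simp only:) (intro gauss2.prob_conj_Phi_le_lipschitz; simp)
  moreover have "{x\<in>space gauss2. Phi (fst x) \<le> q1'} \<in> gauss2.events" by measurable
  then have "\<bar>Gamma \<rho> q1' q2 - Gamma \<rho> q1' q2'\<bar> \<le> \<bar>q2 - q2'\<bar>"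
    unfolding Gamma_eq_prob using assms(1,4,5) distr_corr_normal
    by (intro gauss2.prob_conj_Phi_le_lipschitz) simp_all
  ultimately show ?thesis by linarith
qed

lemma gauss2_prob_outside_square:
  "gauss2.prob {x\<in>space gauss2. K < \<bar>fst x\<bar> \<or> K < \<bar>snd x\<bar>} \<le> 2 * measure std_normal {z. K < \<bar>z\<bar>}"
proof -
  have "{x\<in>space gauss2. K < \<bar>fst x\<bar> \<or> K < \<bar>snd x\<bar>}
      = (fst -` {z. K < \<bar>z\<bar>} \<inter> space gauss2) \<union> (snd -` {z. K < \<bar>z\<bar>} \<inter> space gauss2)" by auto
  then have "gauss2.prob {x\<in>space gauss2. K < \<bar>fst x\<bar> \<or> K < \<bar>snd x\<bar>}
      \<le> gauss2.prob (fst -` {z. K < \<bar>z\<bar>} \<inter> space gauss2) + gauss2.prob (snd -` {z. K < \<bar>z\<bar>} \<inter> space gauss2)"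
    by (simp only:) (rule measure_Un_le; measurable)
  also have "\<dots> = 2 * measure std_normal {z. K < \<bar>z\<bar>}"
    using measure_distr[of fst gauss2 borel "{z. K < \<bar>z\<bar>}"] measure_distr[of snd gauss2 borel "{z. K < \<bar>z\<bar>}"]
    by (simp add: distr_gauss2_fst distr_gauss2_snd del: space_gauss2)
  finally show ?thesis .
qed

lemma corr_normal_diff_le:
  assumes "\<bar>fst x\<bar> \<le> K" "\<bar>snd x\<bar> \<le> K"
  shows "\<bar>corr_normal \<rho> x - corr_normal \<rho>' x\<bar>
    \<le> (\<bar>\<rho> - \<rho>'\<bar> + \<bar>sqrt (1 - \<rho>\<^sup>2) - sqrt (1 - \<rho>'\<^sup>2)\<bar>) * K"
proof -
  have "\<bar>corr_normal \<rho> x - corr_normal \<rho>' x\<bar>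
      \<le> \<bar>\<rho> - \<rho>'\<bar> * \<bar>fst x\<bar> + \<bar>sqrt (1 - \<rho>\<^sup>2) - sqrt (1 - \<rho>'\<^sup>2)\<bar> * \<bar>snd x\<bar>"
    unfolding corr_normal_def abs_mult[symmetric]
    by (rule order_trans[OF _ abs_triangle_ineq]) (simp add: algebra_simps)
  also have "\<dots> \<le> \<bar>\<rho> - \<rho>'\<bar> * K + \<bar>sqrt (1 - \<rho>\<^sup>2) - sqrt (1 - \<rho>'\<^sup>2)\<bar> * K"
    using assms by (intro add_mono mult_left_mono) auto
  finally show ?thesis by (simp add: distrib_right)
qed

lemma Gamma_continuous_rho:
  assumes "\<bar>\<rho>0\<bar> \<le> 1" "e > 0"
  obtains d where "d > 0"
    "\<And>\<rho> q1 q2. \<bar>\<rho>\<bar> \<le> 1 \<Longrightarrow> \<bar>\<rho> - \<rho>0\<bar> < d \<Longrightarrow> q2 \<in> {0..1} \<Longrightarrow>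
       \<bar>Gamma \<rho> q1 q2 - Gamma \<rho>0 q1 q2\<bar> \<le> e"
proof -
  obtain K where K: "K > 0" "measure std_normal {z. K < \<bar>z\<bar>} \<le> e / 4"
    using std_normal_tail[of "e / 4"] assms(2) by auto
  define c where "c = e / (2 * K)"
  have c: "c > 0" "(c + c) * K = e" using K assms(2) by (simp_all add: c_def field_simps)
  have "isCont (\<lambda>r. sqrt (1 - r\<^sup>2)) \<rho>0" by (intro continuous_intros)
  then obtain d1 where d1: "d1 > 0"
    "\<And>r. \<bar>r - \<rho>0\<bar> < d1 \<Longrightarrow> \<bar>sqrt (1 - r\<^sup>2) - sqrt (1 - \<rho>0\<^sup>2)\<bar> < c"
    using c(1) unfolding continuous_at_eps_delta dist_real_def by metis
  show ?thesis
  proof (rule that[of "min d1 c"])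
    show "min d1 c > 0" using d1 c by simp
    fix \<rho> q1 q2 :: real assume \<rho>: "\<bar>\<rho>\<bar> \<le> 1" "\<bar>\<rho> - \<rho>0\<bar> < min d1 c" and q2: "q2 \<in> {0..1}"
    define E where "E = {x\<in>space gauss2. K < \<bar>fst x\<bar> \<or> K < \<bar>snd x\<bar>}"
    have E: "E \<in> gauss2.events" "gauss2.prob E \<le> e / 2"
      using gauss2_prob_outside_square[of K] K unfolding E_def by (measurable, linarith)
    have close: "\<bar>corr_normal \<rho> x - corr_normal \<rho>0 x\<bar> \<le> e" if "x \<in> space gauss2 - E" for x
    proof -
      have "\<bar>corr_normal \<rho> x - corr_normal \<rho>0 x\<bar>
          \<le> (\<bar>\<rho> - \<rho>0\<bar> + \<bar>sqrt (1 - \<rho>\<^sup>2) - sqrt (1 - \<rho>0\<^sup>2)\<bar>) * K"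
        using that by (intro corr_normal_diff_le) (auto simp: E_def)
      also have "\<dots> \<le> (c + c) * K"
        using \<rho> d1(2)[of \<rho>] K by (intro mult_right_mono add_mono) auto
      finally show ?thesis unfolding c(2) .
    qed
    have le: "corr_normal \<rho>0 x \<le> corr_normal \<rho> x + e" "corr_normal \<rho> x \<le> corr_normal \<rho>0 x + e"
      if "x \<in> space gauss2 - E" for x
      using close[OF that] by (simp_all add: abs_le_iff)
    have ev: "{x\<in>space gauss2. Phi (fst x) \<le> q1} \<in> gauss2.events" by measurable
    have "Gamma \<rho> q1 q2 \<le> Gamma \<rho>0 q1 q2 + gauss2.prob E + e / 2"
      unfolding Gamma_eq_prob using E(1) ev q2 assms(2) distr_corr_normal[OF assms(1)]
      by (intro gauss2.prob_conj_Phi_le_perturb le) auto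
    moreover have "Gamma \<rho>0 q1 q2 \<le> Gamma \<rho> q1 q2 + gauss2.prob E + e / 2"
      unfolding Gamma_eq_prob using E(1) ev q2 assms(2) distr_corr_normal[OF \<rho>(1)]
      by (intro gauss2.prob_conj_Phi_le_perturb le) auto
    ultimately show "\<bar>Gamma \<rho> q1 q2 - Gamma \<rho>0 q1 q2\<bar> \<le> e"
      using E(2) by linarith
  qed
qed

text \<open>The case distinction in the definition of \<open>rho\<close> is redundant, as \<open>x / 0 = 0\<close>.\<close>
lemma rho_eq: "rho (ci, cj, c) = (c - ci * cj) / sqrt ((1 - ci\<^sup>2) * (1 - cj\<^sup>2))"
  by (simp add: rho_def)

lemma corr_gap_le_sqrt:
  fixes x y c :: real
  assumes "\<bar>x\<bar> \<le> 1" "\<bar>y\<bar> \<le> 1" "c \<le> 1 - \<bar>x - y\<bar>"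
  shows "c - x * y \<le> sqrt ((1 - x\<^sup>2) * (1 - y\<^sup>2))"
proof -
  have gap: "c - x * y \<le> sqrt ((1 - x\<^sup>2) * (1 - y\<^sup>2))"
    if "y \<le> x" "\<bar>x\<bar> \<le> 1" "\<bar>y\<bar> \<le> 1" "c \<le> 1 - (x - y)" for x y :: real
  proof -
    define u where "u = (1 - x) * (1 + y)"
    have "0 \<le> u" using that by (simp add: u_def)
    then have "0 \<le> u * (2 * (x - y))" using that(1) by simp
    moreover have "(1 - x\<^sup>2) * (1 - y\<^sup>2) - u\<^sup>2 = u * (2 * (x - y))"
      by (simp add: u_def algebra_simps power2_eq_square)
    ultimately have "u\<^sup>2 \<le> (1 - x\<^sup>2) * (1 - y\<^sup>2)" by linarith
    then have "u \<le> sqrt ((1 - x\<^sup>2) * (1 - y\<^sup>2))" by (rule real_le_rsqrt)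
    moreover have "c - x * y \<le> u" using that(4) by (simp add: u_def algebra_simps)
    ultimately show ?thesis by linarith
  qed
  show ?thesis
  proof (cases "y \<le> x")
    case True
    then show ?thesis using gap[of y x] assms by simp
  next
    case False
    then show ?thesis using gap[of x y] assms by (simp add: mult.commute abs_minus_commute)
  qed
qed

lemma abs_rho_le_1:
  assumes "is_config \<theta>"
  shows "\<bar>rho \<theta>\<bar> \<le> 1"
proof -
  obtain ci cj cij where \<theta>: "\<theta> = (ci, cj, cij)" by (cases \<theta>)
  define s where "s = sqrt ((1 - ci\<^sup>2) * (1 - cj\<^sup>2))"
  have bounds: "\<bar>ci\<bar> \<le> 1" "\<bar>cj\<bar> \<le> 1" "-1 + \<bar>ci + cj\<bar> \<le> cij" "cij \<le> 1 - \<bar>ci - cj\<bar>"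
    using assms by (auto simp: is_config_def \<theta>)
  have "cij - ci * cj \<le> s"
    unfolding s_def using bounds by (intro corr_gap_le_sqrt) auto
  \<comment> \<open>the lower face for \<open>(ci, cj, cij)\<close> is the upper face for \<open>(-ci, cj, -cij)\<close>\<close>
  moreover have "- cij - (- ci) * cj \<le> s"
    unfolding s_def using corr_gap_le_sqrt[of "- ci" cj "- cij"] bounds by (simp add: add.commute)
  ultimately have "\<bar>cij - ci * cj\<bar> \<le> s" by linarith
  then show ?thesis
    by (cases "s = 0") (auto simp: \<theta> rho_eq s_def[symmetric] abs_divide divide_le_eq)
qed

definition shift_config :: "real \<Rightarrow> config \<Rightarrow> config" where
  "shift_config \<epsilon> \<theta> = (case \<theta> of (ci, cj, cij) \<Rightarrow> (ci, cj, cij + \<epsilon>))"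

text \<open>Raising \<open>cij\<close> slightly moves such a configuration off the face \<open>cij = -1 + \<bar>ci + cj\<bar>\<close>
  into the interior of the configuration polytope while keeping \<open>\<rho> < 0\<close>.\<close>
definition shiftable_config :: "config \<Rightarrow> bool" where
  "shiftable_config \<theta> \<longleftrightarrow> (case \<theta> of (ci, cj, cij) \<Rightarrow>
     \<bar>ci\<bar> < 1 \<and> \<bar>cj\<bar> < 1 \<and> -1 + \<bar>ci + cj\<bar> \<le> cij \<and> cij < 1 - \<bar>ci - cj\<bar> \<and> cij < ci * cj)"

lemma shiftable_config_imp_is_config: "shiftable_config \<theta> \<Longrightarrow> is_config \<theta>"
  by (auto simp: shiftable_config_def is_config_def split: prod.splits)

lemma eventually_shift_config:
  assumes "shiftable_config \<theta>" "e > 0"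
  shows "\<forall>\<^sub>F \<epsilon> in at_right 0. is_config (shift_config \<epsilon> \<theta>) \<and> positive_config (shift_config \<epsilon> \<theta>) \<and>
    (case shift_config \<epsilon> \<theta> of (ci, cj, cij) \<Rightarrow> -1 + \<bar>ci + cj\<bar> < cij \<and> cij < 1 - \<bar>ci - cj\<bar>) \<and>
    (\<forall>q1 q2. q2 \<in> {0..1} \<longrightarrow> \<bar>Gamma (rho (shift_config \<epsilon> \<theta>)) q1 q2 - Gamma (rho \<theta>) q1 q2\<bar> \<le> e)"
proof -
  obtain ci cj cij where \<theta>: "\<theta> = (ci, cj, cij)" by (cases \<theta>)
  have ci: "\<bar>ci\<bar> < 1" and cj: "\<bar>cj\<bar> < 1" and lower: "-1 + \<bar>ci + cj\<bar> \<le> cij"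
    and upper: "cij < 1 - \<bar>ci - cj\<bar>" and neg: "cij < ci * cj"
    using assms(1) by (auto simp: shiftable_config_def \<theta>)
  define s where "s = sqrt ((1 - ci\<^sup>2) * (1 - cj\<^sup>2))"
  have s: "0 < s"
    using ci cj abs_square_less_1[of ci] abs_square_less_1[of cj] by (simp add: s_def)
  obtain d where d: "d > 0" and close: "\<And>\<rho> q1 q2. \<bar>\<rho>\<bar> \<le> 1 \<Longrightarrow> \<bar>\<rho> - rho \<theta>\<bar> < d \<Longrightarrow> q2 \<in> {0..1} \<Longrightarrow>
       \<bar>Gamma \<rho> q1 q2 - Gamma (rho \<theta>) q1 q2\<bar> \<le> e"
    using Gamma_continuous_rho[OF abs_rho_le_1[OF shiftable_config_imp_is_config[OF assms(1)]] assms(2)]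
    by blast
  show ?thesis
  proof (rule eventually_at_rightI)
    show "0 < min (min (1 - \<bar>ci - cj\<bar> - cij) (ci * cj - cij)) (d * s)"
      using upper neg d s by simp
    fix \<epsilon> assume "\<epsilon> \<in> {0<..<min (min (1 - \<bar>ci - cj\<bar> - cij) (ci * cj - cij)) (d * s)}"
    then have \<epsilon>: "0 < \<epsilon>" "cij + \<epsilon> < 1 - \<bar>ci - cj\<bar>" "cij + \<epsilon> < ci * cj" "\<epsilon> / s < d"
      using s by (auto simp: divide_less_eq mult.commute)
    have shift: "shift_config \<epsilon> \<theta> = (ci, cj, cij + \<epsilon>)" by (simp add: shift_config_def \<theta>)
    have config: "is_config (ci, cj, cij + \<epsilon>)" using ci cj lower \<epsilon> by (auto simp: is_config_def)
    have rho_shift: "rho (ci, cj, cij + \<epsilon>) = rho \<theta> + \<epsilon> / s"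
      unfolding \<theta> rho_eq s_def[symmetric] using s by (simp add: field_simps)
    have "rho (ci, cj, cij + \<epsilon>) \<le> 0"
      using \<epsilon>(3) s by (simp add: rho_eq s_def[symmetric] divide_nonpos_pos)
    moreover have "\<bar>Gamma (rho (ci, cj, cij + \<epsilon>)) q1 q2 - Gamma (rho \<theta>) q1 q2\<bar> \<le> e"
      if "q2 \<in> {0..1}" for q1 q2
      using close[OF abs_rho_le_1[OF config] _ that] rho_shift \<epsilon>(1,4) s by simp
    ultimately show "is_config (shift_config \<epsilon> \<theta>) \<and> positive_config (shift_config \<epsilon> \<theta>) \<and>
      (case shift_config \<epsilon> \<theta> of (ci, cj, cij) \<Rightarrow> -1 + \<bar>ci + cj\<bar> < cij \<and> cij < 1 - \<bar>ci - cj\<bar>) \<and>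
      (\<forall>q1 q2. q2 \<in> {0..1} \<longrightarrow> \<bar>Gamma (rho (shift_config \<epsilon> \<theta>)) q1 q2 - Gamma (rho \<theta>) q1 q2\<bar> \<le> e)"
      using config lower \<epsilon> by (simp add: shift positive_config_def)
  qed
qed

section \<open>Perturbing a blueprint\<close>

lemma biases_map_shift_config: "biases (map_pmf (shift_config \<epsilon>) D) = biases D"
  by (force simp: biases_def shift_config_def split: prod.splits)

lemma completeness_map_shift_config:
  assumes "finite (set_pmf D)"
  shows "completeness (map_pmf (shift_config \<epsilon>) D) = completeness D - \<epsilon> / 2"
proof -
  have completeness_eq: "completeness M = measure_pmf.expectation M (\<lambda>\<theta>. (1 - snd (snd \<theta>)) / 2)"
    for M unfolding completeness_def by (rule arg_cong[where f = "measure_pmf.expectation M"]) auto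
  have shift: "(1 - snd (snd (shift_config \<epsilon> \<theta>))) / 2 = (1 - snd (snd \<theta>)) / 2 - \<epsilon> / 2" for \<theta>
    by (simp add: shift_config_def case_prod_beta diff_divide_distrib add_divide_distrib)
  have "completeness (map_pmf (shift_config \<epsilon>) D)
      = measure_pmf.expectation D (\<lambda>\<theta>. (1 - snd (snd \<theta>)) / 2 - \<epsilon> / 2)"
    unfolding completeness_eq integral_map_pmf shift ..
  also have "\<dots> = completeness D - \<epsilon> / 2"
    unfolding completeness_eq
    by (subst Bochner_Integration.integral_diff) (auto intro: integrable_measure_pmf_finite[OF assms])
  finally show ?thesis .
qed

lemma expectation_le_add:
  fixes f g :: "'a \<Rightarrow> real"
  assumes "finite (set_pmf D)" "\<And>x. x \<in> set_pmf D \<Longrightarrow> f x \<le> g x + c"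
  shows "measure_pmf.expectation D f \<le> measure_pmf.expectation D g + c"
proof -
  have "measure_pmf.expectation D f \<le> measure_pmf.expectation D (\<lambda>x. g x + c)"
    using assms by (intro integral_mono_AE) (auto intro: integrable_measure_pmf_finite AE_pmfI)
  also have "\<dots> = measure_pmf.expectation D g + c"
    using assms(1) by (subst Bochner_Integration.integral_add) (auto intro: integrable_measure_pmf_finite)
  finally show ?thesis .
qed

definition soundness_term :: "(real \<Rightarrow> real) \<Rightarrow> config \<Rightarrow> real" where
  "soundness_term t \<theta> = (case \<theta> of (ci, cj, cij) \<Rightarrow>
     (1 - t ci) / 2 + (1 - t cj) / 2 - 2 * Gamma (rho \<theta>) ((1 - t ci) / 2) ((1 - t cj) / 2))"

lemma soundness_t_eq: "soundness_t D t = measure_pmf.expectation D (soundness_term t)"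
  unfolding soundness_t_def soundness_term_def ..

lemma soundness_term_perturb:
  assumes "\<bar>rho (ci, cj, c)\<bar> \<le> 1"
    and Gamma: "\<And>q1 q2. q1 \<in> {0..1} \<Longrightarrow> q2 \<in> {0..1} \<Longrightarrow>
      \<bar>Gamma (rho (ci, cj, c')) q1 q2 - Gamma (rho (ci, cj, c)) q1 q2\<bar> \<le> e"
    and "t ci \<in> {-1..1}" "t cj \<in> {-1..1}" "t' ci \<in> {-1..1}" "t' cj \<in> {-1..1}"
    and "\<bar>t ci - t' ci\<bar> \<le> \<eta>" "\<bar>t cj - t' cj\<bar> \<le> \<eta>"
  shows "soundness_term t (ci, cj, c') \<le> soundness_term t' (ci, cj, c) + 3 * \<eta> + 2 * e"
proof -
  define qi qj qi' qj' where "qi = (1 - t ci) / 2" "qj = (1 - t cj) / 2"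
    "qi' = (1 - t' ci) / 2" "qj' = (1 - t' cj) / 2"
  have q: "qi \<in> {0..1}" "qj \<in> {0..1}" "qi' \<in> {0..1}" "qj' \<in> {0..1}"
    using assms(3-6) by (auto simp: qi_qj_qi'_qj'_def)
  have "\<bar>Gamma (rho (ci, cj, c)) qi qj - Gamma (rho (ci, cj, c)) qi' qj'\<bar> \<le> \<bar>qi - qi'\<bar> + \<bar>qj - qj'\<bar>"
    using assms(1) q(1,3,2,4) by (rule Gamma_lipschitz)
  moreover have "\<bar>qi - qi'\<bar> \<le> \<eta> / 2" "\<bar>qj - qj'\<bar> \<le> \<eta> / 2"
    using assms(7,8)
    by (simp_all add: qi_qj_qi'_qj'_def diff_divide_distrib[symmetric] abs_divide abs_minus_commute)
  moreover have "\<bar>Gamma (rho (ci, cj, c')) qi qj - Gamma (rho (ci, cj, c)) qi qj\<bar> \<le> e"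
    using Gamma q by blast
  moreover have "soundness_term t (ci, cj, c') = qi + qj - 2 * Gamma (rho (ci, cj, c')) qi qj"
    "soundness_term t' (ci, cj, c) = qi' + qj' - 2 * Gamma (rho (ci, cj, c)) qi' qj'"
    by (simp_all add: soundness_term_def qi_qj_qi'_qj'_def)
  ultimately show ?thesis unfolding abs_le_iff by linarith
qed

definition admissible :: "real set \<Rightarrow> real pmf \<Rightarrow> (real \<Rightarrow> real) \<Rightarrow> bool" where
  "admissible B \<mu> t \<longleftrightarrow> (\<forall>b\<in>B. t b \<in> {-1..1}) \<and> (\<Sum>b\<in>B. pmf \<mu> b * t b) = 0"

lemma soundness_t_le_2:
  assumes "finite (set_pmf D)" "biases D \<subseteq> B" "\<forall>b\<in>B. t b \<in> {-1..1}"
  shows "soundness_t D t \<le> 2"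
proof -
  have "soundness_term t \<theta> \<le> 0 + 2" if "\<theta> \<in> set_pmf D" for \<theta>
  proof -
    obtain ci cj cij where \<theta>: "\<theta> = (ci, cj, cij)" by (cases \<theta>)
    then have "(1 - t ci) / 2 \<le> 1" "(1 - t cj) / 2 \<le> 1" using that assms(2,3) by (auto simp: biases_def)
    moreover have "0 \<le> Gamma (rho \<theta>) ((1 - t ci) / 2) ((1 - t cj) / 2)" by (simp add: Gamma_def)
    ultimately show ?thesis unfolding soundness_term_def \<theta> prod.case by linarith
  qed
  then show ?thesis
    using expectation_le_add[OF assms(1), of "soundness_term t" "\<lambda>_. 0" 2] by (simp add: soundness_t_eq)
qed

lemma soundness_le_soundness:
  assumes "bdd_above {soundness_t D t |t. admissible B \<mu> t}"
    and "\<And>t. admissible B \<mu>' t \<Longrightarrow> \<exists>t'. admissible B \<mu> t' \<and> soundness_t D' t \<le> soundness_t D t' + c"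
  shows "soundness D' B \<mu>' \<le> soundness D B \<mu> + c"
proof -
  have "soundness D' B \<mu>' = Sup {soundness_t D' t |t. admissible B \<mu>' t}"
    by (simp add: soundness_def admissible_def)
  also have "\<dots> \<le> Sup {soundness_t D t |t. admissible B \<mu> t} + c"
  proof (rule cSup_least)
    show "{soundness_t D' t |t. admissible B \<mu>' t} \<noteq> {}"
      by (auto simp: admissible_def intro!: exI[of _ "\<lambda>_. 0"])
    fix x assume "x \<in> {soundness_t D' t |t. admissible B \<mu>' t}"
    then obtain t t' where "x = soundness_t D' t" "admissible B \<mu> t'" "x \<le> soundness_t D t' + c"
      using assms(2) by blast
    moreover have "soundness_t D t' \<le> Sup {soundness_t D t |t. admissible B \<mu> t}"
      using assms(1) \<open>admissible B \<mu> t'\<close> by (intro cSup_upper) auto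
    ultimately show "x \<le> Sup {soundness_t D t |t. admissible B \<mu> t} + c" by linarith
  qed
  also have "\<dots> = soundness D B \<mu> + c"
    by (simp add: soundness_def admissible_def)
  finally show ?thesis .
qed

lemma recentred_admissible:
  assumes "finite B" "set_pmf \<mu> \<subseteq> B" "\<forall>b\<in>B. t b \<in> {-1..1}"
  defines "a \<equiv> \<Sum>b\<in>B. pmf \<mu> b * t b"
  shows "admissible B \<mu> (\<lambda>b. (t b - a) / (1 + \<bar>a\<bar>))"
    and "\<And>b. b \<in> B \<Longrightarrow> \<bar>t b - (t b - a) / (1 + \<bar>a\<bar>)\<bar> \<le> 2 * \<bar>a\<bar>"
proof -
  have "(\<Sum>b\<in>B. pmf \<mu> b) = 1" using assms(1,2) by (rule sum_pmf_eq_1)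
  then have "(\<Sum>b\<in>B. pmf \<mu> b * (t b - a)) = 0"
    by (simp add: a_def right_diff_distrib sum_subtractf sum_distrib_right[symmetric])
  then have "(\<Sum>b\<in>B. pmf \<mu> b * ((t b - a) / (1 + \<bar>a\<bar>))) = 0"
    by (simp add: times_divide_eq_right sum_divide_distrib[symmetric])
  moreover have "(t b - a) / (1 + \<bar>a\<bar>) \<in> {-1..1}" if "b \<in> B" for b
  proof -
    have "\<bar>t b - a\<bar> \<le> 1 + \<bar>a\<bar>" using assms(3) that by auto
    then have "\<bar>(t b - a) / (1 + \<bar>a\<bar>)\<bar> \<le> 1" by (simp add: abs_divide)
    then show ?thesis by (metis abs_le_iff atLeastAtMost_iff minus_le_iff)
  qed
  ultimately show "admissible B \<mu> (\<lambda>b. (t b - a) / (1 + \<bar>a\<bar>))"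
    by (simp add: admissible_def)
  fix b assume "b \<in> B"
  then have "\<bar>t b\<bar> \<le> 1" using assms(3) by auto
  have "t b - (t b - a) / (1 + \<bar>a\<bar>) = (t b * \<bar>a\<bar> + a) / (1 + \<bar>a\<bar>)"
    by (simp add: field_simps add_nonneg_pos)
  also have "\<bar>\<dots>\<bar> \<le> \<bar>t b * \<bar>a\<bar> + a\<bar> / 1"
    unfolding abs_divide by (intro divide_left_mono) auto
  also have "\<dots> \<le> 2 * \<bar>a\<bar>"
    using \<open>\<bar>t b\<bar> \<le> 1\<close> mult_right_mono[of "\<bar>t b\<bar>" 1 "\<bar>a\<bar>"] by (simp add: abs_mult abs_triangle_ineq order_trans[OF abs_triangle_ineq])
  finally show "\<bar>t b - (t b - a) / (1 + \<bar>a\<bar>)\<bar> \<le> 2 * \<bar>a\<bar>" .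
qed

lemma soundness_map_shift_le:
  assumes fin: "finite (set_pmf D)" "finite B" and biases: "biases D \<subseteq> B" and "set_pmf \<mu> \<subseteq> B"
    and configs: "\<And>\<theta>. \<theta> \<in> set_pmf D \<Longrightarrow> is_config \<theta>"
    and Gamma: "\<And>\<theta> q1 q2. \<theta> \<in> set_pmf D \<Longrightarrow> q1 \<in> {0..1} \<Longrightarrow> q2 \<in> {0..1} \<Longrightarrow>
      \<bar>Gamma (rho (shift_config \<epsilon> \<theta>)) q1 q2 - Gamma (rho \<theta>) q1 q2\<bar> \<le> e"
    and mean: "\<And>t. admissible B \<mu>' t \<Longrightarrow> \<bar>\<Sum>b\<in>B. pmf \<mu> b * t b\<bar> \<le> \<alpha>"
  shows "soundness (map_pmf (shift_config \<epsilon>) D) B \<mu>' \<le> soundness D B \<mu> + (6 * \<alpha> + 2 * e)"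
proof (rule soundness_le_soundness)
  show "bdd_above {soundness_t D t |t. admissible B \<mu> t}"
    using soundness_t_le_2[OF fin(1) biases] by (auto simp: admissible_def intro!: bdd_aboveI[of _ 2])
  fix t assume t: "admissible B \<mu>' t"
  define a where "a = (\<Sum>b\<in>B. pmf \<mu> b * t b)"
  define t' where "t' b = (t b - a) / (1 + \<bar>a\<bar>)" for b
  have range: "\<forall>b\<in>B. t b \<in> {-1..1}" using t by (simp add: admissible_def)
  have t'_admissible: "admissible B \<mu> t'"
    unfolding t'_def a_def by (rule recentred_admissible(1)[OF fin(2) assms(4) range])
  have t'_close: "\<bar>t b - t' b\<bar> \<le> 2 * \<alpha>" if "b \<in> B" for b
    using recentred_admissible(2)[OF fin(2) assms(4) range that] mean[OF t]
    unfolding t'_def a_def by linarith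
  have "soundness_term t (shift_config \<epsilon> \<theta>) \<le> soundness_term t' \<theta> + (6 * \<alpha> + 2 * e)"
    if "\<theta> \<in> set_pmf D" for \<theta>
  proof -
    obtain ci cj c where \<theta>: "\<theta> = (ci, cj, c)" by (cases \<theta>)
    then have B: "ci \<in> B" "cj \<in> B" using that biases by (auto simp: biases_def)
    have "soundness_term t (ci, cj, c + \<epsilon>) \<le> soundness_term t' (ci, cj, c) + 3 * (2 * \<alpha>) + 2 * e"
    proof (rule soundness_term_perturb)
      show "\<bar>rho (ci, cj, c)\<bar> \<le> 1" using abs_rho_le_1[OF configs[OF that]] by (simp add: \<theta>)
      show "\<bar>Gamma (rho (ci, cj, c + \<epsilon>)) q1 q2 - Gamma (rho (ci, cj, c)) q1 q2\<bar> \<le> e"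
        if "q1 \<in> {0..1}" "q2 \<in> {0..1}" for q1 q2
        using Gamma[OF \<open>\<theta> \<in> set_pmf D\<close> that] by (simp add: \<theta> shift_config_def)
      show "t ci \<in> {-1..1}" "t cj \<in> {-1..1}" using range B by auto
      show "t' ci \<in> {-1..1}" "t' cj \<in> {-1..1}" using t'_admissible B by (auto simp: admissible_def)
      show "\<bar>t ci - t' ci\<bar> \<le> 2 * \<alpha>" "\<bar>t cj - t' cj\<bar> \<le> 2 * \<alpha>" using t'_close B by auto
    qed
    then show ?thesis by (simp add: \<theta> shift_config_def add.assoc)
  qed
  then have "soundness_t (map_pmf (shift_config \<epsilon>) D) t \<le> soundness_t D t' + (6 * \<alpha> + 2 * e)"
    unfolding soundness_t_eq integral_map_pmf by (rule expectation_le_add[OF fin(1)])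
  with t'_admissible show "\<exists>t'. admissible B \<mu> t' \<and>
      soundness_t (map_pmf (shift_config \<epsilon>) D) t \<le> soundness_t D t' + (6 * \<alpha> + 2 * e)"
    by blast
qed

lemma mixture_mean_abs_le:
  assumes "\<And>b. b \<in> B \<Longrightarrow> pmf \<mu>' b = (1 - w) * pmf \<mu> b + \<nu> b" "w \<le> 1" "admissible B \<mu>' t"
  shows "(1 - w) * \<bar>\<Sum>b\<in>B. pmf \<mu> b * t b\<bar> \<le> (\<Sum>b\<in>B. \<bar>\<nu> b\<bar>)"
proof -
  have "0 = (\<Sum>b\<in>B. pmf \<mu>' b * t b)" using assms(3) by (simp add: admissible_def)
  also have "\<dots> = (\<Sum>b\<in>B. (1 - w) * (pmf \<mu> b * t b) + \<nu> b * t b)"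
    by (intro sum.cong refl) (simp add: assms(1) algebra_simps)
  also have "\<dots> = (1 - w) * (\<Sum>b\<in>B. pmf \<mu> b * t b) + (\<Sum>b\<in>B. \<nu> b * t b)"
    by (simp add: sum.distrib sum_distrib_left)
  finally have "(1 - w) * (\<Sum>b\<in>B. pmf \<mu> b * t b) = - (\<Sum>b\<in>B. \<nu> b * t b)" by linarith
  then have "(1 - w) * \<bar>\<Sum>b\<in>B. pmf \<mu> b * t b\<bar> = \<bar>\<Sum>b\<in>B. \<nu> b * t b\<bar>"
    using assms(2) by (metis abs_minus_cancel abs_mult abs_of_nonneg diff_ge_0_iff_ge)
  also have "\<dots> \<le> (\<Sum>b\<in>B. \<bar>\<nu> b\<bar>)"
    using assms(3) by (intro order_trans[OF sum_abs] sum_mono) (auto simp: admissible_def abs_mult mult_left_le)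
  finally show ?thesis .
qed

lemma blueprint_shift:
  assumes "is_blueprint D B \<mu>" "\<forall>\<theta>\<in>set_pmf D. shiftable_config \<theta>"
    and "set_pmf \<mu>' \<subseteq> B" "(\<Sum>b\<in>B. pmf \<mu>' b * b) = 0"
    and mean: "\<And>t. admissible B \<mu>' t \<Longrightarrow> \<bar>\<Sum>b\<in>B. pmf \<mu> b * t b\<bar> \<le> \<alpha>"
    and "e > 0" "\<eta> > 0"
  obtains \<epsilon> where "positive_blueprint (map_pmf (shift_config \<epsilon>) D) B \<mu>'"
    "completeness (map_pmf (shift_config \<epsilon>) D) \<ge> completeness D - \<eta>"
    "soundness (map_pmf (shift_config \<epsilon>) D) B \<mu>' \<le> soundness D B \<mu> + (6 * \<alpha> + 2 * e)"
    "\<forall>(ci, cj, cij)\<in>set_pmf (map_pmf (shift_config \<epsilon>) D). -1 + \<bar>ci + cj\<bar> < cij \<and> cij < 1 - \<bar>ci - cj\<bar>"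
proof -
  have fin: "finite (set_pmf D)" and configs: "\<And>\<theta>. \<theta> \<in> set_pmf D \<Longrightarrow> is_config \<theta>"
    and B: "B = biases D" and \<mu>: "set_pmf \<mu> \<subseteq> B"
    using assms(1) by (auto simp: is_blueprint_def)
  have "finite B" using fin by (auto simp: B biases_def)
  have "\<forall>\<^sub>F \<epsilon> in at_right 0. (0 < \<epsilon> \<and> \<epsilon> < \<eta>) \<and> (\<forall>\<theta>\<in>set_pmf D.
      is_config (shift_config \<epsilon> \<theta>) \<and> positive_config (shift_config \<epsilon> \<theta>) \<and>
      (case shift_config \<epsilon> \<theta> of (ci, cj, cij) \<Rightarrow> -1 + \<bar>ci + cj\<bar> < cij \<and> cij < 1 - \<bar>ci - cj\<bar>) \<and>
      (\<forall>q1 q2. q2 \<in> {0..1} \<longrightarrow> \<bar>Gamma (rho (shift_config \<epsilon> \<theta>)) q1 q2 - Gamma (rho \<theta>) q1 q2\<bar> \<le> e))"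
    (is "\<forall>\<^sub>F \<epsilon> in _. _ \<and> ?shifted \<epsilon>")
    using assms(2,6,7)
    by (intro eventually_conj eventually_at_rightI[of 0 \<eta>] eventually_ball_finite[OF fin]
        ballI eventually_shift_config) auto
  then obtain \<epsilon> where \<epsilon>: "0 < \<epsilon>" "\<epsilon> < \<eta>" and shifted: "?shifted \<epsilon>"
    using eventually_happens'[OF trivial_limit_at_right_real] by blast
  show ?thesis
  proof (rule that)
    show "positive_blueprint (map_pmf (shift_config \<epsilon>) D) B \<mu>'"
      using shifted fin assms(3,4)
      by (auto simp: positive_blueprint_def is_blueprint_def biases_map_shift_config B)
    show "completeness (map_pmf (shift_config \<epsilon>) D) \<ge> completeness D - \<eta>"
      using completeness_map_shift_config[OF fin, of \<epsilon>] \<epsilon> by simp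
    show "soundness (map_pmf (shift_config \<epsilon>) D) B \<mu>' \<le> soundness D B \<mu> + (6 * \<alpha> + 2 * e)"
      using shifted by (intro soundness_map_shift_le[OF fin \<open>finite B\<close> _ \<mu> configs _ mean]) (auto simp: B)
    show "\<forall>(ci, cj, cij)\<in>set_pmf (map_pmf (shift_config \<epsilon>) D). -1 + \<bar>ci + cj\<bar> < cij \<and> cij < 1 - \<bar>ci - cj\<bar>"
      using shifted by auto
  qed
qed

section \<open>The blueprint \<open>D*\<close>\<close>

lemma bb_bounds: "1/100 < bb" "bb < 19/50"
  using b_GW_bounds by (simp_all add: bb_def)

lemma biases_in_bb:
  "b1 = -2 * bb - 13/1000" "b2 = - bb - 1/250" "b3 = 1/250" "b4 = bb - 1/250" "b5 = 2 * bb + 1/250"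
  "b_GW = bb - 1"
  by (simp_all add: b1_def b2_def b3_def b4_def b5_def nu1_def nu2_def bb_def)

lemma biases_strict_order: "-1 < b1" "b1 < b2" "b2 < 0" "0 < b3" "b3 < b4" "b4 < b5" "b5 < 1"
  using bb_bounds by (simp_all add: biases_in_bb)

lemma biases_distinct [simp]:
  "b1 \<noteq> b2" "b1 \<noteq> b3" "b1 \<noteq> b4" "b1 \<noteq> b5" "b2 \<noteq> b3" "b2 \<noteq> b4" "b2 \<noteq> b5"
  "b3 \<noteq> b4" "b3 \<noteq> b5" "b4 \<noteq> b5"
  "b2 \<noteq> b1" "b3 \<noteq> b1" "b4 \<noteq> b1" "b5 \<noteq> b1" "b3 \<noteq> b2" "b4 \<noteq> b2" "b5 \<noteq> b2"
  "b4 \<noteq> b3" "b5 \<noteq> b3" "b5 \<noteq> b4"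
  using biases_strict_order by auto

lemma set_pmf_D_star:
  "set_pmf D_star = {(b2, b4, b_GW), (b3, b4, b_GW), (b2, b3, b_GW), (b2, b5, b_GW), (b1, b5, b_GW)}"
  unfolding D_star_def by (subst set_pmf_of_list_eq) (auto simp: pmf_of_list_wf_def)

lemma biases_D_star: "biases D_star = B_star"
  by (auto simp: biases_def set_pmf_D_star B_star_def)

lemma shiftable_D_star: "\<theta> \<in> set_pmf D_star \<Longrightarrow> shiftable_config \<theta>"
proof -
  have sq: "bb * bb \<le> 19/50 * bb" using bb_bounds by (simp add: mult_right_mono)
  have "b_GW < b2 * b4" using bb_bounds by (simp add: biases_in_bb field_simps) (use sq in linarith)
  moreover have "b_GW < b2 * b5" using bb_bounds by (simp add: biases_in_bb field_simps) (use sq in linarith)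
  moreover have "b_GW < b1 * b5" using bb_bounds by (simp add: biases_in_bb field_simps) (use sq in linarith)
  moreover have "b_GW < b3 * b4" "b_GW < b2 * b3" using bb_bounds by (simp_all add: biases_in_bb field_simps)
  moreover have "-1 + \<bar>b2 + b4\<bar> \<le> b_GW" "-1 + \<bar>b3 + b4\<bar> \<le> b_GW" "-1 + \<bar>b2 + b3\<bar> \<le> b_GW"
    "-1 + \<bar>b2 + b5\<bar> \<le> b_GW" "-1 + \<bar>b1 + b5\<bar> \<le> b_GW"
    "b_GW < 1 - \<bar>b2 - b4\<bar>" "b_GW < 1 - \<bar>b3 - b4\<bar>" "b_GW < 1 - \<bar>b2 - b3\<bar>"
    "b_GW < 1 - \<bar>b2 - b5\<bar>" "b_GW < 1 - \<bar>b1 - b5\<bar>"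
    using bb_bounds by (simp_all add: biases_in_bb abs_if)
  moreover have "\<bar>b1\<bar> < 1" "\<bar>b2\<bar> < 1" "\<bar>b3\<bar> < 1" "\<bar>b4\<bar> < 1" "\<bar>b5\<bar> < 1"
    using biases_strict_order by auto
  ultimately have "shiftable_config (b2, b4, b_GW)" "shiftable_config (b3, b4, b_GW)"
    "shiftable_config (b2, b3, b_GW)" "shiftable_config (b2, b5, b_GW)" "shiftable_config (b1, b5, b_GW)"
    unfolding shiftable_config_def prod.case by blast+
  then show "\<theta> \<in> set_pmf D_star \<Longrightarrow> shiftable_config \<theta>"
    by (auto simp: set_pmf_D_star)
qed

lemma pmf_mu_star:
  "pmf mu_star b = (if b = b1 then b4 / (b4 - b1) else if b = b4 then - b1 / (b4 - b1) else 0)"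
proof -
  have "b4 - b1 > 0" using biases_strict_order by simp
  then have "pmf_of_list_wf [(b1, b4 / (b4 - b1)), (b4, - b1 / (b4 - b1))]"
    using biases_strict_order by (auto simp: pmf_of_list_wf_def divide_simps)
  then show ?thesis by (simp add: mu_star_def pmf_pmf_of_list)
qed

definition kappa_star :: real where
  "kappa_star = (b2 + b3 + b5) / (b4 - b1)"

lemma mu_star_facts:
  "pmf mu_star b1 + pmf mu_star b4 = 1" "pmf mu_star b1 * b1 + pmf mu_star b4 * b4 = 0"
  "pmf mu_star b2 = 0" "pmf mu_star b3 = 0" "pmf mu_star b5 = 0"
  "kappa_star * (b4 - b1) = b2 + b3 + b5"
proof -
  have nz: "b4 - b1 \<noteq> 0" using biases_strict_order by simp
  show "pmf mu_star b1 + pmf mu_star b4 = 1"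
    using nz by (simp add: pmf_mu_star diff_divide_distrib[symmetric])
  have "pmf mu_star b1 * b1 + pmf mu_star b4 * b4 = (b4 * b1 + - b1 * b4) / (b4 - b1)"
    by (simp add: pmf_mu_star add_divide_distrib)
  then show "pmf mu_star b1 * b1 + pmf mu_star b4 * b4 = 0" by simp
  show "kappa_star * (b4 - b1) = b2 + b3 + b5" using nz by (simp add: kappa_star_def)
qed (simp_all add: pmf_mu_star)

lemma mu_star_bounds: "1/10 \<le> pmf mu_star b1" "1/2 \<le> pmf mu_star b4" "0 \<le> kappa_star" "kappa_star \<le> 1/2"
  using bb_bounds by (simp_all add: pmf_mu_star kappa_star_def biases_in_bb field_simps)

lemma sum_B_star: "(\<Sum>b\<in>B_star. f b) = f b1 + f b2 + f b3 + f b4 + f b5"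
  by (simp add: B_star_def add.assoc)

text \<open>The masses \<open>kappa_star\<close> at \<open>b1\<close> and \<open>-kappa_star\<close> at \<open>b4\<close> cancel the mean of the unit
  masses at \<open>b2\<close>, \<open>b3\<close>, \<open>b5\<close>.\<close>
definition nu_star :: "real \<Rightarrow> real" where
  "nu_star b = (if b \<in> {b2, b3, b5} then 1 else if b = b1 then kappa_star else if b = b4 then - kappa_star else 0)"

definition mu_delta_weight :: "real \<Rightarrow> real \<Rightarrow> real" where
  "mu_delta_weight \<delta> b = (1 - 3 * \<delta>) * pmf mu_star b + \<delta> * nu_star b"

definition mu_delta :: "real \<Rightarrow> real pmf" where
  "mu_delta \<delta> = pmf_of_list (map (\<lambda>b. (b, mu_delta_weight \<delta> b)) [b1, b2, b3, b4, b5])"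

lemma sum_mu_delta_weight:
  "(\<Sum>b\<in>B_star. mu_delta_weight \<delta> b) = 1" "(\<Sum>b\<in>B_star. mu_delta_weight \<delta> b * b) = 0"
proof -
  have "(\<Sum>b\<in>B_star. mu_delta_weight \<delta> b)
      = (1 - 3 * \<delta>) * (pmf mu_star b1 + pmf mu_star b4) + 3 * \<delta>"
    by (simp add: sum_B_star mu_delta_weight_def nu_star_def mu_star_facts(3-5) algebra_simps)
  then show "(\<Sum>b\<in>B_star. mu_delta_weight \<delta> b) = 1" by (simp add: mu_star_facts(1))
  have "(\<Sum>b\<in>B_star. mu_delta_weight \<delta> b * b)
      = (1 - 3 * \<delta>) * (pmf mu_star b1 * b1 + pmf mu_star b4 * b4)
        + \<delta> * (b2 + b3 + b5 - kappa_star * (b4 - b1))"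
    by (simp add: sum_B_star mu_delta_weight_def nu_star_def mu_star_facts(3-5) algebra_simps)
  then show "(\<Sum>b\<in>B_star. mu_delta_weight \<delta> b * b) = 0" by (simp add: mu_star_facts(2,6))
qed

lemma mu_delta_weight_ge:
  assumes "0 < \<delta>" "\<delta> < 1/100" "b \<in> B_star"
  shows "\<delta> \<le> mu_delta_weight \<delta> b"
proof -
  have "97/100 * (1/10) \<le> (1 - 3 * \<delta>) * pmf mu_star b1"
    by (rule mult_mono) (use assms(2) mu_star_bounds in auto)
  moreover have "0 \<le> \<delta> * kappa_star" using assms(1) mu_star_bounds(3) by simp
  moreover have "mu_delta_weight \<delta> b1 = (1 - 3 * \<delta>) * pmf mu_star b1 + \<delta> * kappa_star"
    by (simp add: mu_delta_weight_def nu_star_def)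
  ultimately have b1: "\<delta> \<le> mu_delta_weight \<delta> b1" using assms(2) by linarith
  have "97/100 * (1/2) \<le> (1 - 3 * \<delta>) * pmf mu_star b4"
    by (rule mult_mono) (use assms(2) mu_star_bounds in auto)
  moreover have "\<delta> * kappa_star \<le> \<delta> * (1/2)"
    using assms(1) mu_star_bounds(4) by (simp add: mult_left_mono)
  moreover have "mu_delta_weight \<delta> b4 = (1 - 3 * \<delta>) * pmf mu_star b4 - \<delta> * kappa_star"
    by (simp add: mu_delta_weight_def nu_star_def)
  ultimately have b4: "\<delta> \<le> mu_delta_weight \<delta> b4" using assms(2) by linarith
  have "mu_delta_weight \<delta> b = \<delta>" if "b \<in> {b2, b3, b5}" for b
    using that by (auto simp: mu_delta_weight_def nu_star_def mu_star_facts(3-5))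
  with b1 b4 assms(3) show ?thesis by (auto simp: B_star_def)
qed

lemma pmf_mu_delta:
  assumes "0 < \<delta>" "\<delta> < 1/100"
  shows "pmf (mu_delta \<delta>) b = (if b \<in> B_star then mu_delta_weight \<delta> b else 0)"
proof -
  have "pmf_of_list_wf (map (\<lambda>b. (b, mu_delta_weight \<delta> b)) [b1, b2, b3, b4, b5])"
    using mu_delta_weight_ge[OF assms] assms(1) sum_mu_delta_weight(1)
    by (force simp: pmf_of_list_wf_def B_star_def sum_B_star add.assoc)
  then show ?thesis by (auto simp: mu_delta_def pmf_pmf_of_list B_star_def)
qed

lemma mean_mu_star_small:
  assumes "0 < \<delta>" "\<delta> < 1/100" "admissible B_star (mu_delta \<delta>) t"
  shows "\<bar>\<Sum>b\<in>B_star. pmf mu_star b * t b\<bar> \<le> 5 * \<delta>"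
proof -
  have "(1 - 3 * \<delta>) * \<bar>\<Sum>b\<in>B_star. pmf mu_star b * t b\<bar> \<le> (\<Sum>b\<in>B_star. \<bar>\<delta> * nu_star b\<bar>)"
    using assms by (intro mixture_mean_abs_le[of B_star "mu_delta \<delta>" "3 * \<delta>"])
      (auto simp: pmf_mu_delta mu_delta_weight_def)
  also have "\<dots> = 3 * \<delta> + 2 * (\<delta> * kappa_star)"
    using assms(1) mu_star_bounds(3) by (simp add: sum_B_star nu_star_def abs_mult)
  also have "\<dots> \<le> 4 * \<delta>"
    using assms(1) mu_star_bounds(4) mult_left_mono[of kappa_star "1/2" \<delta>] by simp
  finally have "(1 - 3 * \<delta>) * \<bar>\<Sum>b\<in>B_star. pmf mu_star b * t b\<bar> \<le> 4 * \<delta>" .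
  moreover have "4 * \<delta> \<le> (1 - 3 * \<delta>) * (5 * \<delta>)" using assms(1,2) by (simp add: algebra_simps)
  ultimately have "(1 - 3 * \<delta>) * \<bar>\<Sum>b\<in>B_star. pmf mu_star b * t b\<bar> \<le> (1 - 3 * \<delta>) * (5 * \<delta>)"
    by linarith
  then show ?thesis by (rule mult_left_le_imp_le) (use assms(2) in simp)
qed

lemma set_pmf_mu_star: "set_pmf mu_star \<subseteq> B_star"
  by (auto simp: set_pmf_eq pmf_mu_star B_star_def split: if_splits)

lemma is_blueprint_D_star: "is_blueprint D_star B_star mu_star"
  using shiftable_D_star shiftable_config_imp_is_config set_pmf_mu_star mu_star_facts(2-5)
  by (auto simp: is_blueprint_def set_pmf_D_star biases_D_star sum_B_star)

lemma mu_delta_blueprint: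
  assumes "0 < \<delta>" "\<delta> < 1/100"
  shows "set_pmf (mu_delta \<delta>) \<subseteq> B_star" "(\<Sum>b\<in>B_star. pmf (mu_delta \<delta>) b * b) = 0"
    "\<forall>b\<in>B_star. \<delta> \<le> pmf (mu_delta \<delta>) b"
  using assms sum_mu_delta_weight(2) mu_delta_weight_ge
  by (auto simp: set_pmf_eq pmf_mu_delta split: if_splits)

theorem lemma3p4:
  shows "\<exists>\<delta>0 > 0. \<exists>C > 0. \<forall>\<delta>::real. 0 < \<delta> \<and> \<delta> < \<delta>0 \<longrightarrow>
    (\<exists>D' \<mu>'. positive_blueprint D' B_star \<mu>' \<and>
       completeness D' \<ge> completeness D_star - C * \<delta> \<and>
       soundness D' B_star \<mu>' \<le> soundness D_star B_star mu_star + C * \<delta> \<and>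
       (\<forall>(ci, cj, cij)\<in>set_pmf D'. -1 + \<bar>ci + cj\<bar> < cij \<and> cij < 1 - \<bar>ci - cj\<bar>) \<and>
       (\<forall>b\<in>B_star. pmf \<mu>' b \<ge> \<delta>))"
proof (rule exI[of _ "1/100"], intro conjI exI[of _ 31] allI impI)
  fix \<delta> :: real assume "0 < \<delta> \<and> \<delta> < 1/100"
  then have \<delta>: "0 < \<delta>" "\<delta> < 1/100" by simp_all
  obtain \<epsilon> where "positive_blueprint (map_pmf (shift_config \<epsilon>) D_star) B_star (mu_delta \<delta>)"
    "completeness (map_pmf (shift_config \<epsilon>) D_star) \<ge> completeness D_star - \<delta>"
    "soundness (map_pmf (shift_config \<epsilon>) D_star) B_star (mu_delta \<delta>)
      \<le> soundness D_star B_star mu_star + (6 * (5 * \<delta>) + 2 * (\<delta> / 2))"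
    "\<forall>(ci, cj, cij)\<in>set_pmf (map_pmf (shift_config \<epsilon>) D_star).
      -1 + \<bar>ci + cj\<bar> < cij \<and> cij < 1 - \<bar>ci - cj\<bar>"
    by (rule blueprint_shift[OF is_blueprint_D_star _ mu_delta_blueprint(1,2)[OF \<delta>]
        mean_mu_star_small[OF \<delta>], of "\<delta> / 2" \<delta>]) (use shiftable_D_star \<delta> in auto)
  with \<delta> mu_delta_blueprint(3)[OF \<delta>] show "\<exists>D' \<mu>'. positive_blueprint D' B_star \<mu>' \<and>
       completeness D' \<ge> completeness D_star - 31 * \<delta> \<and>
       soundness D' B_star \<mu>' \<le> soundness D_star B_star mu_star + 31 * \<delta> \<and>
       (\<forall>(ci, cj, cij)\<in>set_pmf D'. -1 + \<bar>ci + cj\<bar> < cij \<and> cij < 1 - \<bar>ci - cj\<bar>) \<and>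
       (\<forall>b\<in>B_star. pmf \<mu>' b \<ge> \<delta>)"
    by (intro exI[of _ "map_pmf (shift_config \<epsilon>) D_star"] exI[of _ "mu_delta \<delta>"]) auto
qed simp_all

end
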